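(* Let $K$ be a skew field, $V$ a left (topological) $K$-vector space with basis $v^0,v^1,\ldots$, $V'$ the dual right $K$-vector space with basis $p_0,p_1,\ldots$, with pairing $(\cdot,\cdot)$, and assume $D=(y_i^k)$, $y_i^k=(v^k,p_i)$, is generic. For $\mathbf f\in V$, $\mathbf g\in V'$ put $f_i=(\mathbf f,p_i)$, $g^k=(v^k,\mathbf g)$ and, for $n\ge0$, $$R_n(\mathbf f,\mathbf g)=(\mathbf f,\mathbf g)-\sum_{i,k=0}^n f_i(z_k^i)_n g^k .$$ Then $$(\mathbf f,\mathbf g)=\sum_{m=0}^n\Delta_R^m f\;|D_m|_m^m\;\Delta_L^m g+R_n(\mathbf f,\mathbf g),$$ and $R_n(\mathbf f,p_i)=R_n(v^k,\mathbf g)=0$ for all $\mathbf f\in V$, $\mathbf g\in V'$ and $0\le i,k\le n$.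
   Context: The pairing $(\cdot,\cdot):V\times V'\to K$ is biadditive with $(\lambda v,p\mu)=\lambda(v,p)\mu$. $D_m$ is the $(m+1)\times(m+1)$ matrix with entry $y_i^k$ in row $k$, column $i$ ($0\le i,k\le m$), and $(z_k^i)_n$ is the entry in row $i$, column $k$ of $D_n^{-1}$. Quasideterminants: for a square matrix $M$ with rows/columns indexed by $\{0,\ldots,n\}$ and entry $M_a^b$ in row $b$, column $a$, $|M|_a^b=M_a^b-r\,(M^{(b,a)})^{-1}c$, where $M^{(b,a)}$ deletes row $b$ and column $a$, $r$ is row $b$ without its column-$a$ entry and $c$ is column $a$ without its row-$b$ entry ($|M|_0^0=M_0^0$ for $1\times1$ matrices). Difference derivatives: let $A=(a_m^i)$ (upper triangular, $a_m^i=0$ for $i>m$) and $C=(c_k^m)$ (lower triangular, $c_k^m=0$ for $k>m$) be the unique matrices such that $q_m=\sum_{i=0}^m p_ia_m^i$ and $w^m=\sum_{k=0}^m c_k^m v^k$ satisfy $(w^m,q_{m'})=0$ for $m\ne m'$ and $(w^m,p_m)=(v^m,q_m)=1$. Then $\Delta_R^m f=(\mathbf f,q_m)=\sum_{i=0}^m f_ia_m^i$ and $\Delta_L^m g=(w^m,\mathbf g)=\sum_{k=0}^m c_k^m g^k$. Genericity means all $D_m$ and all quasideterminants appearing are invertible. *)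

theory Defs
  imports Main
begin

(* Matrices are functions M :: nat => nat => 'k, with M r c the entry in row r, column c. *)

(* N (rows indexed by Cs, columns by Rs) is the two-sided inverse of M (rows Rs, columns Cs);
   N is normalised to be 0 outside Cs x Rs so that it is unique. *)
definition is_inv_on :: "nat set \<Rightarrow> nat set \<Rightarrow> (nat \<Rightarrow> nat \<Rightarrow> 'k::ring_1) \<Rightarrow> (nat \<Rightarrow> nat \<Rightarrow> 'k) \<Rightarrow> bool" where
  "is_inv_on Rs Cs M N \<longleftrightarrow>
     (\<forall>r\<in>Rs. \<forall>r'\<in>Rs. (\<Sum>c\<in>Cs. M r c * N c r') = (if r = r' then 1 else 0)) \<and>
     (\<forall>c\<in>Cs. \<forall>c'\<in>Cs. (\<Sum>r\<in>Rs. N c r * M r c') = (if c = c' then 1 else 0)) \<and>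
     (\<forall>c r. c \<notin> Cs \<or> r \<notin> Rs \<longrightarrow> N c r = 0)"

definition invertible_on :: "nat set \<Rightarrow> nat set \<Rightarrow> (nat \<Rightarrow> nat \<Rightarrow> 'k::ring_1) \<Rightarrow> bool" where
  "invertible_on Rs Cs M \<longleftrightarrow> (\<exists>N. is_inv_on Rs Cs M N)"

definition inv_on :: "nat set \<Rightarrow> nat set \<Rightarrow> (nat \<Rightarrow> nat \<Rightarrow> 'k::ring_1) \<Rightarrow> (nat \<Rightarrow> nat \<Rightarrow> 'k)" where
  "inv_on Rs Cs M = (THE N. is_inv_on Rs Cs M N)"

(* Quasideterminant |M|_a^b of the (n+1)x(n+1) matrix M (indices 0..n), b = row, a = column:
   M_a^b - r (M^{(b,a)})^{-1} c. *)
definition quasidet :: "nat \<Rightarrow> (nat \<Rightarrow> nat \<Rightarrow> 'k::ring_1) \<Rightarrow> nat \<Rightarrow> nat \<Rightarrow> 'k" where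
  "quasidet n M a b =
     M b a - (\<Sum>a'\<in>{0..n}-{a}. \<Sum>b'\<in>{0..n}-{b}.
                 M b a' * inv_on ({0..n}-{b}) ({0..n}-{a}) M a' b' * M b' a)"

(* D_m : entry y_i^k (= y i k) in row k, column i, 0 <= i,k <= m *)
definition Dmat :: "(nat \<Rightarrow> nat \<Rightarrow> 'k::ring_1) \<Rightarrow> nat \<Rightarrow> nat \<Rightarrow> nat \<Rightarrow> 'k" where
  "Dmat y m = (\<lambda>r c. if r \<le> m \<and> c \<le> m then y c r else 0)"

(* (z_k^i)_n = entry in row i, column k of D_n^{-1} *)
definition zcoef :: "(nat \<Rightarrow> nat \<Rightarrow> 'k::ring_1) \<Rightarrow> nat \<Rightarrow> nat \<Rightarrow> nat \<Rightarrow> 'k" where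
  "zcoef y n i k = inv_on {0..n} {0..n} (Dmat y n) i k"

definition generic :: "(nat \<Rightarrow> nat \<Rightarrow> 'k::division_ring) \<Rightarrow> bool" where
  "generic y \<longleftrightarrow> (\<forall>m. invertible_on {0..m} {0..m} (Dmat y m) \<and> quasidet m (Dmat y m) m m \<noteq> 0)"

definition left_module :: "('k::ring_1 \<Rightarrow> 'v::ab_group_add \<Rightarrow> 'v) \<Rightarrow> bool" where
  "left_module sm \<longleftrightarrow>
     (\<forall>a x y. sm a (x + y) = sm a x + sm a y) \<and> (\<forall>a b x. sm (a + b) x = sm a x + sm b x) \<and>
     (\<forall>a b x. sm (a * b) x = sm a (sm b x)) \<and> (\<forall>x. sm 1 x = x)"

definition right_module :: "('w::ab_group_add \<Rightarrow> 'k::ring_1 \<Rightarrow> 'w) \<Rightarrow> bool" where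
  "right_module sm \<longleftrightarrow>
     (\<forall>a x y. sm (x + y) a = sm x a + sm y a) \<and> (\<forall>a b x. sm x (a + b) = sm x a + sm x b) \<and>
     (\<forall>a b x. sm x (a * b) = sm (sm x a) b) \<and> (\<forall>x. sm x 1 = x)"

definition pairing :: "('k::ring_1 \<Rightarrow> 'v::ab_group_add \<Rightarrow> 'v) \<Rightarrow> ('w::ab_group_add \<Rightarrow> 'k \<Rightarrow> 'w) \<Rightarrow> ('v \<Rightarrow> 'w \<Rightarrow> 'k) \<Rightarrow> bool" where
  "pairing smL smR pr \<longleftrightarrow>
     (\<forall>x x' g. pr (x + x') g = pr x g + pr x' g) \<and> (\<forall>x g g'. pr x (g + g') = pr x g + pr x g') \<and>
     (\<forall>l x g m. pr (smL l x) (smR g m) = l * pr x g * m)"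

definition qvec :: "('w::ab_group_add \<Rightarrow> 'k \<Rightarrow> 'w) \<Rightarrow> (nat \<Rightarrow> 'w) \<Rightarrow> (nat \<Rightarrow> nat \<Rightarrow> 'k) \<Rightarrow> nat \<Rightarrow> 'w" where
  "qvec smR p a m = (\<Sum>i\<le>m. smR (p i) (a i m))"

definition wvec :: "('k \<Rightarrow> 'v::ab_group_add \<Rightarrow> 'v) \<Rightarrow> (nat \<Rightarrow> 'v) \<Rightarrow> (nat \<Rightarrow> nat \<Rightarrow> 'k) \<Rightarrow> nat \<Rightarrow> 'v" where
  "wvec smL v c m = (\<Sum>k\<le>m. smL (c k m) (v k))"

definition DeltaR :: "('v \<Rightarrow> 'w \<Rightarrow> 'k::ring_1) \<Rightarrow> (nat \<Rightarrow> 'w) \<Rightarrow> (nat \<Rightarrow> nat \<Rightarrow> 'k) \<Rightarrow> nat \<Rightarrow> 'v \<Rightarrow> 'k" where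
  "DeltaR pr p a m f = (\<Sum>i\<le>m. pr f (p i) * a i m)"

definition DeltaL :: "('v \<Rightarrow> 'w \<Rightarrow> 'k::ring_1) \<Rightarrow> (nat \<Rightarrow> 'v) \<Rightarrow> (nat \<Rightarrow> nat \<Rightarrow> 'k) \<Rightarrow> nat \<Rightarrow> 'w \<Rightarrow> 'k" where
  "DeltaL pr v c m g = (\<Sum>k\<le>m. c k m * pr (v k) g)"

definition remainder :: "('v \<Rightarrow> 'w \<Rightarrow> 'k::ring_1) \<Rightarrow> (nat \<Rightarrow> 'v) \<Rightarrow> (nat \<Rightarrow> 'w) \<Rightarrow> nat \<Rightarrow> 'v \<Rightarrow> 'w \<Rightarrow> 'k" where
  "remainder pr v p n f g =
     pr f g - (\<Sum>i\<le>n. \<Sum>k\<le>n. pr f (p i) * zcoef (\<lambda>i k. pr (v k) (p i)) n i k * pr (v k) g)"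

end

theory Submission
  imports Defs
begin

(* Write y_i^k = (v^k, p_i) and Z_m = D_m^{-1}. Triangularity plus biorthogonality force
   a_m^i = (z_m^i)_m and c_k^m = (z_k^m)_m: q_m and w^m are built from the last column and the
   last row of D_m^{-1}. The corner entry (z_m^m)_m is the inverse of |D_m|_m^m, and bordering
   D_m to D_(m+1) changes the inverse on the old block by the rank-one term
   (last column) |D_(m+1)|_(m+1)^(m+1) (last row). Telescoping gives
   Z_n = sum_m (column of Z_m) |D_m|_m^m (row of Z_m), which is the expansion; the remainder
   vanishes on p_i and v^k because Z_n inverts D_n. *)

lemma is_inv_on_left_solution:
  fixes M N :: "nat \<Rightarrow> nat \<Rightarrow> 'k::ring_1"
  assumes "finite Rs" "finite Cs" "is_inv_on Rs Cs M N" "c \<in> Cs" "r \<in> Rs"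
    and "\<forall>c'\<in>Cs. (\<Sum>r'\<in>Rs. x r' * M r' c') = (if c = c' then 1 else 0)"
  shows "x r = N c r"
proof -
  have "x r = (\<Sum>r'\<in>Rs. x r' * (if r' = r then 1 else 0))"
    using assms(1,5) by (simp flip: of_bool_def)
  also have "\<dots> = (\<Sum>r'\<in>Rs. x r' * (\<Sum>c'\<in>Cs. M r' c' * N c' r))"
    using assms(3,5) unfolding is_inv_on_def by (intro sum.cong) auto
  also have "\<dots> = (\<Sum>c'\<in>Cs. (\<Sum>r'\<in>Rs. x r' * M r' c') * N c' r)"
    by (simp add: sum_distrib_left sum_distrib_right mult.assoc sum.swap[of _ Rs])
  also have "\<dots> = N c r"
    using assms(2,4,6) by (simp flip: of_bool_def)
  finally show ?thesis .
qed

lemma is_inv_on_right_solution: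
  fixes M N :: "nat \<Rightarrow> nat \<Rightarrow> 'k::ring_1"
  assumes "finite Rs" "finite Cs" "is_inv_on Rs Cs M N" "c \<in> Cs" "r \<in> Rs"
    and "\<forall>r'\<in>Rs. (\<Sum>c'\<in>Cs. M r' c' * x c') = (if r' = r then 1 else 0)"
  shows "x c = N c r"
proof -
  have "x c = (\<Sum>c'\<in>Cs. (if c = c' then 1 else 0) * x c')"
    using assms(2,4) by (simp flip: of_bool_def)
  also have "\<dots> = (\<Sum>c'\<in>Cs. (\<Sum>r'\<in>Rs. N c r' * M r' c') * x c')"
    using assms(3,4) unfolding is_inv_on_def by (intro sum.cong) auto
  also have "\<dots> = (\<Sum>r'\<in>Rs. N c r' * (\<Sum>c'\<in>Cs. M r' c' * x c'))"
    by (simp add: sum_distrib_left sum_distrib_right mult.assoc sum.swap[of _ Rs])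
  also have "\<dots> = N c r"
    using assms(1,5,6) by (simp flip: of_bool_def)
  finally show ?thesis .
qed

lemma is_inv_on_unique:
  assumes "finite Rs" "finite Cs" "is_inv_on Rs Cs M N" "is_inv_on Rs Cs M N'"
  shows "N' = N"
proof (intro ext)
  fix c r
  show "N' c r = N c r"
  proof (cases "c \<in> Cs \<and> r \<in> Rs")
    case True
    then show ?thesis
      using is_inv_on_left_solution[OF assms(1-3), of c r "N' c"] assms(4)
      unfolding is_inv_on_def by auto
  next
    case False
    then show ?thesis using assms(3,4) unfolding is_inv_on_def by auto
  qed
qed

lemma is_inv_on_inv_on:
  assumes "finite Rs" "finite Cs" "is_inv_on Rs Cs M N"
  shows "is_inv_on Rs Cs M (inv_on Rs Cs M)"
  unfolding inv_on_def using assms is_inv_on_unique by (metis theI)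

lemma is_inv_on_cong:
  assumes "\<And>r c. r \<in> Rs \<Longrightarrow> c \<in> Cs \<Longrightarrow> M r c = M' r c"
  shows "is_inv_on Rs Cs M N \<longleftrightarrow> is_inv_on Rs Cs M' N"
  unfolding is_inv_on_def using assms by (simp cong: sum.cong)

lemma is_inv_onD:
  assumes "is_inv_on Rs Cs M N"
  shows "\<And>r r'. r \<in> Rs \<Longrightarrow> r' \<in> Rs \<Longrightarrow> (\<Sum>c\<in>Cs. M r c * N c r') = (if r = r' then 1 else 0)"
    and "\<And>c c'. c \<in> Cs \<Longrightarrow> c' \<in> Cs \<Longrightarrow> (\<Sum>r\<in>Rs. N c r * M r c') = (if c = c' then 1 else 0)"
    and "\<And>c r. c \<notin> Cs \<or> r \<notin> Rs \<Longrightarrow> N c r = 0"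
  using assms unfolding is_inv_on_def by blast+

lemma inverse_corner_mult_quasidet:
  fixes M Z :: "nat \<Rightarrow> nat \<Rightarrow> 'k::ring_1"
  assumes Z: "is_inv_on {..m} {..m} M Z" and block: "invertible_on {..<m} {..<m} M"
  shows "Z m m * quasidet m M m m = 1"
proof -
  define P where "P = inv_on {..<m} {..<m} M"
  have "is_inv_on {..<m} {..<m} M P"
    using block is_inv_on_inv_on unfolding P_def invertible_on_def by blast
  then have MP: "(\<Sum>a<m. M k a * P a b) = (if k = b then 1 else 0)" if "k < m" "b < m" for k b
    using that by (simp add: is_inv_onD(1))
  have ZM: "(\<Sum>k<m. Z m k * M k j) + Z m m * M m j = (if m = j then 1 else 0)" if "j \<le> m" for j
    using is_inv_onD(2)[OF Z, of m j] that by (simp add: atLeast0AtMost lessThan_Suc_atMost[symmetric] add.commute)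
  have ZM_corner: "Z m m * M m a = - (\<Sum>k<m. Z m k * M k a)" if "a < m" for a
    using ZM[of a] that by (simp add: eq_neg_iff_add_eq_0 add.commute)
  have deleted: "{0..m} - {m} = {..<m}" by auto
  have "Z m m * quasidet m M m m
      = Z m m * M m m - (\<Sum>a<m. \<Sum>b<m. (Z m m * M m a) * P a b * M b m)"
    unfolding quasidet_def deleted P_def by (simp add: right_diff_distrib sum_distrib_left mult.assoc)
  also have "\<dots> = Z m m * M m m + (\<Sum>k<m. \<Sum>b<m. Z m k * (\<Sum>a<m. M k a * P a b) * M b m)"
  proof -
    have "(\<Sum>a<m. \<Sum>b<m. (Z m m * M m a) * P a b * M b m)
        = - (\<Sum>a<m. \<Sum>b<m. \<Sum>k<m. Z m k * M k a * P a b * M b m)"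
      by (simp add: ZM_corner sum_distrib_right sum_negf)
    also have "\<dots> = - (\<Sum>k<m. \<Sum>b<m. \<Sum>a<m. Z m k * M k a * P a b * M b m)"
      by (subst sum.swap, subst (2) sum.swap, subst sum.swap) simp
    also have "\<dots> = - (\<Sum>k<m. \<Sum>b<m. Z m k * (\<Sum>a<m. M k a * P a b) * M b m)"
      by (simp add: sum_distrib_left sum_distrib_right mult.assoc)
    finally show ?thesis by simp
  qed
  also have "\<dots> = Z m m * M m m + (\<Sum>k<m. Z m k * M k m)"
    by (intro arg_cong2[where f = "(+)"] sum.cong refl)
      (simp add: MP mult.assoc flip: sum_distrib_left of_bool_def)
  also have "\<dots> = 1"
    using ZM[of m] by (simp add: add.commute)
  finally show ?thesis .
qed

lemma inverse_corner_nonzero: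
  fixes M Z :: "nat \<Rightarrow> nat \<Rightarrow> 'k::division_ring"
  assumes "is_inv_on {..m} {..m} M Z" "invertible_on {..<m} {..<m} M"
  shows "Z m m \<noteq> 0"
  using inverse_corner_mult_quasidet[OF assms] by force

lemma invertible_on_lessThan:
  assumes "\<And>m. is_inv_on {..m} {..m} M (Z m)"
  shows "invertible_on {..<m} {..<m} M"
proof (cases m)
  case 0
  have "is_inv_on {} {} M (\<lambda>_ _. 0)" unfolding is_inv_on_def by simp
  then show ?thesis using 0 unfolding invertible_on_def by auto
next
  case (Suc m')
  then show ?thesis
    using assms[of m'] unfolding invertible_on_def Suc lessThan_Suc_atMost by blast
qed

lemma inverse_leading_block:
  fixes M N Z :: "nat \<Rightarrow> nat \<Rightarrow> 'k::division_ring"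
  assumes N: "is_inv_on {..Suc m} {..Suc m} M N" and Z: "is_inv_on {..m} {..m} M Z"
  shows "Z i k = N i k - N i (Suc m) * inverse (N (Suc m) (Suc m)) * N (Suc m) k"
proof -
  let ?s = "Suc m"
  let ?\<nu> = "inverse (N ?s ?s)"
  have "invertible_on {..<?s} {..<?s} M"
    using Z unfolding invertible_on_def lessThan_Suc_atMost by blast
  then have Nss: "N ?s ?s \<noteq> 0" by (rule inverse_corner_nonzero[OF N])
  consider "i \<le> m" "k \<le> m" | "i = ?s" | "k = ?s" | "?s < i \<or> ?s < k"
    by linarith
  then show ?thesis
  proof cases
    case 1
    have NM: "(\<Sum>k\<le>m. N i' k * M k j) = (if i' = j then 1 else 0) - N i' ?s * M ?s j"
      if "i' \<le> ?s" "j \<le> m" for i' j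
    proof -
      have "(\<Sum>k\<le>?s. N i' k * M k j) = (if i' = j then 1 else 0)"
        using that by (intro is_inv_onD(2)[OF N]) auto
      then show ?thesis by (simp add: atMost_Suc eq_diff_eq add.commute)
    qed
    have "(\<Sum>k\<le>m. (N i k - N i ?s * ?\<nu> * N ?s k) * M k j) = (if i = j then 1 else 0)"
      if "j \<le> m" for j
    proof -
      have "(\<Sum>k\<le>m. (N i k - N i ?s * ?\<nu> * N ?s k) * M k j)
          = (\<Sum>k\<le>m. N i k * M k j) - N i ?s * ?\<nu> * (\<Sum>k\<le>m. N ?s k * M k j)"
        by (simp add: left_diff_distrib sum_subtractf sum_distrib_left mult.assoc)
      also have "\<dots> = (if i = j then 1 else 0) - N i ?s * M ?s j + N i ?s * (?\<nu> * N ?s ?s) * M ?s j"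
        using that 1 by (simp add: NM right_diff_distrib mult.assoc)
      also have "\<dots> = (if i = j then 1 else 0)"
        using Nss by simp
      finally show ?thesis .
    qed
    then have "(\<lambda>k. N i k - N i ?s * ?\<nu> * N ?s k) k = Z i k"
      using 1 by (intro is_inv_on_left_solution[OF _ _ Z]) auto
    then show ?thesis by simp
  next
    case 2
    then show ?thesis using Nss is_inv_onD(3)[OF Z, of i k] by (simp add: mult.assoc)
  next
    case 3
    then show ?thesis using Nss is_inv_onD(3)[OF Z, of i k] by (simp add: mult.assoc)
  next
    case 4
    then show ?thesis using is_inv_onD(3)[OF Z] is_inv_onD(3)[OF N] by auto
  qed
qed

lemma inverse_leading_expansion:
  fixes M :: "nat \<Rightarrow> nat \<Rightarrow> 'k::division_ring"
  assumes inv: "\<And>m. is_inv_on {..m} {..m} M (Z m)"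
  shows "Z n i k = (\<Sum>m\<le>n. Z m i m * inverse (Z m m m) * Z m m k)"
proof (induction n)
  case 0
  show ?case
  proof (cases "i = 0 \<and> k = 0")
    case True
    then show ?thesis
      by (cases "Z 0 0 0 = 0") (simp_all add: mult.assoc)
  next
    case False
    then show ?thesis using is_inv_onD(3)[OF inv[of 0]] by auto
  qed
next
  case (Suc n)
  then show ?case
    using inverse_leading_block[OF inv inv, of n i k] by (simp add: atMost_Suc algebra_simps)
qed

lemma upper_triangular_system_zero:
  fixes a :: "nat \<Rightarrow> nat \<Rightarrow> 'k::division_ring"
  assumes "\<forall>j<m. a j j \<noteq> 0" "\<forall>j<m. (\<Sum>i\<le>j. u i * a i j) = 0" "j < m"
  shows "u j = 0"
  using assms(3)
proof (induction j rule: less_induct)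
  case (less j)
  have "(\<Sum>i<j. u i * a i j) = 0"
    using less by (intro sum.neutral) auto
  moreover have "(\<Sum>i\<le>j. u i * a i j) = 0"
    using assms(2) less.prems by blast
  ultimately have "u j * a j j = 0"
    by (simp add: lessThan_Suc_atMost[symmetric])
  then show ?case using assms(1) less.prems by simp
qed

lemma lower_triangular_system_zero:
  fixes c :: "nat \<Rightarrow> nat \<Rightarrow> 'k::division_ring"
  assumes "\<forall>j<m. c j j \<noteq> 0" "\<forall>j<m. (\<Sum>k\<le>j. c k j * u k) = 0" "j < m"
  shows "u j = 0"
  using assms(3)
proof (induction j rule: less_induct)
  case (less j)
  have "(\<Sum>k<j. c k j * u k) = 0"
    using less by (intro sum.neutral) auto
  moreover have "(\<Sum>k\<le>j. c k j * u k) = 0"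
    using assms(2) less.prems by blast
  ultimately have "c j j * u j = 0"
    by (simp add: lessThan_Suc_atMost[symmetric])
  then show ?case using assms(1) less.prems by simp
qed

lemma triangular_biorthogonal_eq_inverse:
  fixes M :: "nat \<Rightarrow> nat \<Rightarrow> 'k::division_ring" and Z :: "nat \<Rightarrow> nat \<Rightarrow> nat \<Rightarrow> 'k"
  assumes inv: "\<And>m. is_inv_on {..m} {..m} M (Z m)"
    and upper: "\<forall>i m. m < i \<longrightarrow> a i m = 0" and lower: "\<forall>k m. m < k \<longrightarrow> c k m = 0"
    and biorth: "\<And>m m'. m \<noteq> m' \<Longrightarrow> (\<Sum>k\<le>m. \<Sum>i\<le>m'. c k m * M k i * a i m') = 0"
    and norm_c: "\<And>m. (\<Sum>k\<le>m. c k m * M k m) = 1"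
    and norm_a: "\<And>m. (\<Sum>i\<le>m. M m i * a i m) = 1"
  shows "a i m = Z m i m \<and> c k m = Z m m k"
proof (induction m arbitrary: i k rule: less_induct)
  case (less m)
  \<comment> \<open>earlier diagonal entries are corners of inverses, so the triangular systems are solvable\<close>
  have diag: "a j j \<noteq> 0 \<and> c j j \<noteq> 0" if "j < m" for j
    using less[OF that] inverse_corner_nonzero[OF inv invertible_on_lessThan[OF inv]] by simp
  define u where "u j = (\<Sum>k\<le>m. c k m * M k j)" for j
  have "(\<Sum>i\<le>j. u i * a i j) = 0" if "j < m" for j
    using biorth[of m j] that unfolding u_def
    by (simp add: sum_distrib_right sum.swap[of _ "{..m}"])
  then have "u j = 0" if "j < m" for j
    using diag that by (intro upper_triangular_system_zero[of m a u]) auto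
  then have "\<forall>j\<in>{..m}. (\<Sum>k\<le>m. c k m * M k j) = (if m = j then 1 else 0)"
    using norm_c unfolding u_def by auto
  then have c_row: "c k m = Z m m k" if "k \<le> m" for k
    using that by (intro is_inv_on_left_solution[OF _ _ inv]) auto
  define s where "s k = (\<Sum>i\<le>m. M k i * a i m)" for k
  have "(\<Sum>k\<le>j. c k j * s k) = 0" if "j < m" for j
    using biorth[of j m] that unfolding s_def
    by (simp add: sum_distrib_left mult.assoc)
  then have "s k = 0" if "k < m" for k
    using diag that by (intro lower_triangular_system_zero[of m c s]) auto
  then have "\<forall>k\<in>{..m}. (\<Sum>i\<le>m. M k i * a i m) = (if k = m then 1 else 0)"
    using norm_a unfolding s_def by auto
  then have a_col: "a i m = Z m i m" if "i \<le> m" for i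
    using that by (intro is_inv_on_right_solution[OF _ _ inv]) auto
  have "a i m = Z m i m"
    using a_col[of i] upper is_inv_onD(3)[OF inv[of m], of i m] by (cases "i \<le> m") auto
  moreover have "c k m = Z m m k"
    using c_row[of k] lower is_inv_onD(3)[OF inv[of m], of m k] by (cases "k \<le> m") auto
  ultimately show ?case ..
qed

lemma is_inv_on_Dmat_iff:
  assumes "Rs \<subseteq> {..n}"
  shows "is_inv_on Rs Rs (Dmat y n) N \<longleftrightarrow> is_inv_on Rs Rs (\<lambda>r c. y c r) N"
  using assms by (intro is_inv_on_cong) (auto simp: Dmat_def)

(* The untruncated matrix with entry y i k in row k, column i has every D_m as a leading block. *)
context
  fixes y :: "nat \<Rightarrow> nat \<Rightarrow> 'k::division_ring"
  assumes gen: "generic y"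
begin

lemma zcoef_is_inv_on: "is_inv_on {..m} {..m} (\<lambda>r c. y c r) (zcoef y m)"
proof -
  have "is_inv_on {..m} {..m} (Dmat y m) (zcoef y m)"
    using gen is_inv_on_inv_on unfolding generic_def invertible_on_def zcoef_def atLeast0AtMost
    by blast
  then show ?thesis by (simp add: is_inv_on_Dmat_iff)
qed

lemma quasidet_Dmat_eq_inverse_zcoef: "quasidet m (Dmat y m) m m = inverse (zcoef y m m m)"
proof -
  have "is_inv_on {..m} {..m} (Dmat y m) (zcoef y m)"
    using zcoef_is_inv_on by (simp add: is_inv_on_Dmat_iff)
  moreover obtain P where "is_inv_on {..<m} {..<m} (\<lambda>r c. y c r) P"
    using invertible_on_lessThan[OF zcoef_is_inv_on] unfolding invertible_on_def by blast
  then have "is_inv_on {..<m} {..<m} (Dmat y m) P"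
    by (subst is_inv_on_Dmat_iff) auto
  then have "invertible_on {..<m} {..<m} (Dmat y m)"
    unfolding invertible_on_def by blast
  ultimately show ?thesis
    by (metis inverse_corner_mult_quasidet inverse_unique)
qed

lemma zcoef_expansion:
  "zcoef y n i k = (\<Sum>m\<le>n. zcoef y m i m * quasidet m (Dmat y m) m m * zcoef y m m k)"
  unfolding quasidet_Dmat_eq_inverse_zcoef by (rule inverse_leading_expansion[OF zcoef_is_inv_on])

lemma zcoef_bilinear_expansion:
  "(\<Sum>m\<le>n. (\<Sum>i\<le>m. F i * zcoef y m i m) * quasidet m (Dmat y m) m m * (\<Sum>k\<le>m. zcoef y m m k * G k))
     = (\<Sum>i\<le>n. \<Sum>k\<le>n. F i * zcoef y n i k * G k)"
proof -
  let ?Z = "zcoef y" and ?q = "\<lambda>m. quasidet m (Dmat y m) m m"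
  have zero: "?Z m i k = 0" if "m < i \<or> m < k" for m i k
    using is_inv_onD(3)[OF zcoef_is_inv_on] that by auto
  have "(\<Sum>i\<le>m. F i * ?Z m i m) = (\<Sum>i\<le>n. F i * ?Z m i m)"
    and "(\<Sum>k\<le>m. ?Z m m k * G k) = (\<Sum>k\<le>n. ?Z m m k * G k)" if "m \<le> n" for m
    using that by (auto intro!: sum.mono_neutral_left) (use zero not_le in blast)+
  then have "(\<Sum>m\<le>n. (\<Sum>i\<le>m. F i * ?Z m i m) * ?q m * (\<Sum>k\<le>m. ?Z m m k * G k))
      = (\<Sum>m\<le>n. \<Sum>k\<le>n. \<Sum>i\<le>n. F i * (?Z m i m * ?q m * ?Z m m k) * G k)"
    by (simp add: sum_distrib_left sum_distrib_right mult.assoc)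
  also have "\<dots> = (\<Sum>i\<le>n. \<Sum>k\<le>n. \<Sum>m\<le>n. F i * (?Z m i m * ?q m * ?Z m m k) * G k)"
    by (subst sum.swap, subst (2) sum.swap, subst sum.swap) simp
  also have "\<dots> = (\<Sum>i\<le>n. \<Sum>k\<le>n. F i * ?Z n i k * G k)"
    by (simp add: zcoef_expansion[of n] sum_distrib_left sum_distrib_right)
  finally show ?thesis .
qed

end

lemma remainder_basis_right:
  assumes "generic (\<lambda>i k. pr (v k) (p i))" "j \<le> n"
  shows "remainder pr v p n f (p j) = 0"
proof -
  let ?Z = "zcoef (\<lambda>i k. pr (v k) (p i)) n"
  have "(\<Sum>i\<le>n. \<Sum>k\<le>n. pr f (p i) * ?Z i k * pr (v k) (p j))
      = (\<Sum>i\<le>n. pr f (p i) * (\<Sum>k\<le>n. ?Z i k * pr (v k) (p j)))"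
    by (simp add: sum_distrib_left mult.assoc)
  also have "\<dots> = (\<Sum>i\<le>n. pr f (p i) * (if i = j then 1 else 0))"
    using is_inv_onD(2)[OF zcoef_is_inv_on[OF assms(1)]] assms(2) by simp
  also have "\<dots> = pr f (p j)"
    using assms(2) by (simp flip: of_bool_def)
  finally show ?thesis unfolding remainder_def by simp
qed

lemma remainder_basis_left:
  assumes "generic (\<lambda>i k. pr (v k) (p i))" "j \<le> n"
  shows "remainder pr v p n (v j) g = 0"
proof -
  let ?Z = "zcoef (\<lambda>i k. pr (v k) (p i)) n"
  have "(\<Sum>i\<le>n. \<Sum>k\<le>n. pr (v j) (p i) * ?Z i k * pr (v k) g)
      = (\<Sum>k\<le>n. \<Sum>i\<le>n. pr (v j) (p i) * ?Z i k * pr (v k) g)"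
    by (rule sum.swap)
  also have "\<dots> = (\<Sum>k\<le>n. (\<Sum>i\<le>n. pr (v j) (p i) * ?Z i k) * pr (v k) g)"
    by (simp add: sum_distrib_right)
  also have "\<dots> = (\<Sum>k\<le>n. (if j = k then 1 else 0) * pr (v k) g)"
    using is_inv_onD(1)[OF zcoef_is_inv_on[OF assms(1)]] assms(2) by simp
  also have "\<dots> = pr (v j) g"
    using assms(2) by (simp flip: of_bool_def)
  finally show ?thesis unfolding remainder_def by simp
qed

lemma pairing_sum_left:
  assumes "pairing smL smR pr"
  shows "pr (\<Sum>x\<in>A. X x) g = (\<Sum>x\<in>A. pr (X x) g)"
proof -
  have add: "pr (x + x') g = pr x g + pr x' g" for x x'
    using assms unfolding pairing_def by blast
  then have "pr 0 g = 0"
    using add[of 0 0] by simp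
  then have "sum ((\<lambda>x. pr x g) \<circ> X) A = pr (sum X A) g"
    using add by (intro sum_comp_morphism)
  then show ?thesis by (simp add: comp_def)
qed

lemma pairing_sum_right:
  assumes "pairing smL smR pr"
  shows "pr f (\<Sum>x\<in>A. G x) = (\<Sum>x\<in>A. pr f (G x))"
proof -
  have add: "pr f (g + g') = pr f g + pr f g'" for g g'
    using assms unfolding pairing_def by blast
  then have "pr f 0 = 0"
    using add[of 0 0] by simp
  then have "sum ((\<lambda>g. pr f g) \<circ> G) A = pr f (sum G A)"
    using add by (intro sum_comp_morphism)
  then show ?thesis by (simp add: comp_def)
qed

lemma pairing_wvec:
  assumes "right_module smR" "pairing smL smR pr"
  shows "pr (wvec smL v c m) g = (\<Sum>k\<le>m. c k m * pr (v k) g)"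
proof -
  have "pr (smL l x) g = l * pr x g" for l x
    using assms unfolding right_module_def pairing_def by (metis mult.right_neutral)
  then show ?thesis
    unfolding wvec_def by (simp add: pairing_sum_left[OF assms(2)])
qed

lemma pairing_qvec:
  assumes "left_module smL" "pairing smL smR pr"
  shows "pr f (qvec smR p a m) = (\<Sum>i\<le>m. pr f (p i) * a i m)"
proof -
  have "pr f (smR g \<mu>) = pr f g * \<mu>" for g \<mu>
    using assms unfolding left_module_def pairing_def by (metis mult_1_left)
  then show ?thesis
    unfolding qvec_def by (simp add: pairing_sum_right[OF assms(2)])
qed

lemma pairing_wvec_qvec:
  assumes "left_module smL" "right_module smR" "pairing smL smR pr"
  shows "pr (wvec smL v c m) (qvec smR p a m') = (\<Sum>k\<le>m. \<Sum>i\<le>m'. c k m * pr (v k) (p i) * a i m')"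
proof -
  have "pr (wvec smL v c m) (qvec smR p a m') = (\<Sum>k\<le>m. c k m * pr (v k) (qvec smR p a m'))"
    by (rule pairing_wvec[OF assms(2,3)])
  also have "\<dots> = (\<Sum>k\<le>m. \<Sum>i\<le>m'. c k m * pr (v k) (p i) * a i m')"
    by (simp add: pairing_qvec[OF assms(1,3)] sum_distrib_left mult.assoc)
  finally show ?thesis .
qed

theorem theorem7:
  fixes smL :: "'k::division_ring \<Rightarrow> 'v::ab_group_add \<Rightarrow> 'v"
    and smR :: "'w::ab_group_add \<Rightarrow> 'k \<Rightarrow> 'w"
    and pr :: "'v \<Rightarrow> 'w \<Rightarrow> 'k"
    and v :: "nat \<Rightarrow> 'v" and p :: "nat \<Rightarrow> 'w"
    and a c :: "nat \<Rightarrow> nat \<Rightarrow> 'k"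
    and f :: 'v and g :: 'w and n :: nat
  assumes "left_module smL" and "right_module smR" and "pairing smL smR pr"
    and gen: "generic (\<lambda>i k. pr (v k) (p i))"
    and A_upper: "\<forall>i m. m < i \<longrightarrow> a i m = 0"
    and C_lower: "\<forall>k m. m < k \<longrightarrow> c k m = 0"
    and biorth: "\<forall>m m'. m \<noteq> m' \<longrightarrow> pr (wvec smL v c m) (qvec smR p a m') = 0"
    and norm_w: "\<forall>m. pr (wvec smL v c m) (p m) = 1"
    and norm_q: "\<forall>m. pr (v m) (qvec smR p a m) = 1"
  shows "pr f g = (\<Sum>m\<le>n. DeltaR pr p a m f
                       * quasidet m (Dmat (\<lambda>i k. pr (v k) (p i)) m) m m
                       * DeltaL pr v c m g)
                  + remainder pr v p n f g
         \<and> (\<forall>f' i. i \<le> n \<longrightarrow> remainder pr v p n f' (p i) = 0)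
         \<and> (\<forall>g' k. k \<le> n \<longrightarrow> remainder pr v p n (v k) g' = 0)"
proof -
  let ?y = "\<lambda>i k. pr (v k) (p i)"
  let ?Z = "zcoef ?y"
  have "(\<Sum>k\<le>m. \<Sum>i\<le>m'. c k m * pr (v k) (p i) * a i m') = 0" if "m \<noteq> m'" for m m'
    using biorth that by (simp add: pairing_wvec_qvec[OF assms(1-3)])
  moreover have "(\<Sum>k\<le>m. c k m * pr (v k) (p m)) = 1" for m
    using norm_w by (simp add: pairing_wvec[OF assms(2,3)])
  moreover have "(\<Sum>i\<le>m. pr (v m) (p i) * a i m) = 1" for m
    using norm_q by (simp add: pairing_qvec[OF assms(1,3)])
  ultimately have "a i m = ?Z m i m \<and> c k m = ?Z m m k" for i k m
    by (intro triangular_biorthogonal_eq_inverse[OF zcoef_is_inv_on[OF gen] A_upper C_lower]) auto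
  then have "DeltaR pr p a m f = (\<Sum>i\<le>m. pr f (p i) * ?Z m i m)"
    and "DeltaL pr v c m g = (\<Sum>k\<le>m. ?Z m m k * pr (v k) g)" for m
    unfolding DeltaR_def DeltaL_def by simp_all
  then have "(\<Sum>m\<le>n. DeltaR pr p a m f * quasidet m (Dmat ?y m) m m * DeltaL pr v c m g)
      = (\<Sum>i\<le>n. \<Sum>k\<le>n. pr f (p i) * ?Z n i k * pr (v k) g)"
    by (simp add: zcoef_bilinear_expansion[OF gen])
  moreover have "pr f g = (\<Sum>i\<le>n. \<Sum>k\<le>n. pr f (p i) * ?Z n i k * pr (v k) g) + remainder pr v p n f g"
    unfolding remainder_def by simp
  ultimately show ?thesis
    using remainder_basis_right[where pr = pr and v = v and p = p, OF gen]
      remainder_basis_left[where pr = pr and v = v and p = p, OF gen]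
    by auto
qed

end
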